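(* Let $A\in\mathcal S_{0,1}$. Then $LJ=J$ and $L(i_VF)=\frac12 i_VF$ for every $V\in\mathbb R^n$.
   Context: $G\subset SO(r)$ compact with Lie algebra $\mathfrak g$; $E$ the trivial $G$-vector bundle over $\mathbb R^n$. Connection $A=A_idx^i$, curvature $F_{ij}=\partial_iA_j-\partial_jA_i+[A_i,A_j]$; repeated indices summed; $\nabla_pT=\partial_pT+[A_p,T]$. $J=\nabla_pF_{pj}dx^j$, $i_VF=V^pF_{pj}dx^j$. $\mathcal S_{0,1}$: connections with $\nabla_pF_{pj}-\frac12x^pF_{pj}=0$ for all $j$ and $\sup|\nabla^kA|<\infty$ for all $k\ge1$. For a $\mathfrak g$-valued 1-form $\theta$: $((d^\nabla)^*d^\nabla\theta)_j=-\nabla_p(\nabla_p\theta_j-\nabla_j\theta_p)$, $\mathcal R(\theta)_j=[F_{pj},\theta_p]$, $(i_{x/2}d^\nabla\theta)_j=\frac12x^k(\nabla_k\theta_j-\nabla_j\theta_k)$, and $L\theta=-[(d^\nabla)^*d^\nabla\theta+\mathcal R(\theta)+i_{x/2}d^\nabla\theta]$. *)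

theory Defs
  imports "HOL-Analysis.Analysis"
begin

type_synonym ('r) mat = "real^'r^'r"

fun matpow :: "real^'r^'r \<Rightarrow> nat \<Rightarrow> real^'r^'r" where
  "matpow X 0 = mat 1"
| "matpow X (Suc k) = X ** matpow X k"

definition mexp :: "real^'r^'r \<Rightarrow> real^'r^'r" where
  "mexp X = (\<Sum>k. (1 / fact k) *\<^sub>R matpow X k)"

definition SO :: "(real^'r^'r) set" where
  "SO = {M. transpose M ** M = mat 1 \<and> det M = 1}"

text \<open>A compact subgroup of SO(r): a closed subgroup (closed subsets of the compact SO(r)
  are compact, and closed subgroups are Lie groups).\<close>
definition compact_subgroup_SO :: "(real^'r^'r) set \<Rightarrow> bool" where
  "compact_subgroup_SO G \<longleftrightarrow> G \<subseteq> SO \<and> mat 1 \<in> G \<and>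
     (\<forall>M\<in>G. \<forall>N\<in>G. M ** N \<in> G) \<and> (\<forall>M\<in>G. matrix_inv M \<in> G) \<and> compact G"

definition lie_algebra :: "(real^'r^'r) set \<Rightarrow> (real^'r^'r) set" where
  "lie_algebra G = {X. \<forall>t::real. mexp (t *\<^sub>R X) \<in> G}"

definition br :: "real^'r^'r \<Rightarrow> real^'r^'r \<Rightarrow> real^'r^'r" where
  "br X Y = X ** Y - Y ** X"

definition pd :: "'n::finite \<Rightarrow> (real^'n \<Rightarrow> 'b::real_normed_vector) \<Rightarrow> real^'n \<Rightarrow> 'b" where
  "pd i f x = frechet_derivative f (at x) (axis i 1)"

fun iterpd :: "'n::finite list \<Rightarrow> (real^'n \<Rightarrow> 'b::real_normed_vector) \<Rightarrow> real^'n \<Rightarrow> 'b" where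
  "iterpd [] f = f"
| "iterpd (i # is) f = pd i (iterpd is f)"

definition smooth_fun :: "(real^'n::finite \<Rightarrow> 'b::real_normed_vector) \<Rightarrow> bool" where
  "smooth_fun f \<longleftrightarrow> (\<forall>is x. iterpd is f differentiable (at x))"

text \<open>A connection A = A_i dx^i on the trivial bundle over R^n: A i x \<in> g.\<close>

definition curv :: "('n::finite \<Rightarrow> real^'n \<Rightarrow> real^'r^'r) \<Rightarrow> 'n \<Rightarrow> 'n \<Rightarrow> real^'n \<Rightarrow> real^'r^'r" where
  "curv A i j x = pd i (A j) x - pd j (A i) x + br (A i x) (A j x)"

definition cov :: "('n::finite \<Rightarrow> real^'n \<Rightarrow> real^'r^'r) \<Rightarrow> 'n \<Rightarrow> (real^'n \<Rightarrow> real^'r^'r) \<Rightarrow> real^'n \<Rightarrow> real^'r^'r" where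
  "cov A p T x = pd p T x + br (A p x) (T x)"

definition Jform :: "('n::finite \<Rightarrow> real^'n \<Rightarrow> real^'r^'r) \<Rightarrow> 'n \<Rightarrow> real^'n \<Rightarrow> real^'r^'r" where
  "Jform A j x = (\<Sum>p\<in>UNIV. cov A p (curv A p j) x)"

definition iF :: "('n::finite \<Rightarrow> real^'n \<Rightarrow> real^'r^'r) \<Rightarrow> real^'n \<Rightarrow> 'n \<Rightarrow> real^'n \<Rightarrow> real^'r^'r" where
  "iF A V j x = (\<Sum>p\<in>UNIV. (V $ p) *\<^sub>R curv A p j x)"

definition S01 :: "(real^'r^'r) set \<Rightarrow> ('n::finite \<Rightarrow> real^'n \<Rightarrow> real^'r^'r) \<Rightarrow> bool" where
  "S01 g A \<longleftrightarrow>
     (\<forall>i x. A i x \<in> g) \<and> (\<forall>i. smooth_fun (A i)) \<and>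
     (\<forall>j x. Jform A j x - (1/2) *\<^sub>R (\<Sum>p\<in>UNIV. (x $ p) *\<^sub>R curv A p j x) = 0) \<and>
     (\<forall>is i. is \<noteq> [] \<longrightarrow> bounded (range (iterpd is (A i))))"

definition dstard :: "('n::finite \<Rightarrow> real^'n \<Rightarrow> real^'r^'r) \<Rightarrow> ('n \<Rightarrow> real^'n \<Rightarrow> real^'r^'r) \<Rightarrow> 'n \<Rightarrow> real^'n \<Rightarrow> real^'r^'r" where
  "dstard A \<theta> j x = - (\<Sum>p\<in>UNIV. cov A p (\<lambda>y. cov A p (\<theta> j) y - cov A j (\<theta> p) y) x)"

definition Rop :: "('n::finite \<Rightarrow> real^'n \<Rightarrow> real^'r^'r) \<Rightarrow> ('n \<Rightarrow> real^'n \<Rightarrow> real^'r^'r) \<Rightarrow> 'n \<Rightarrow> real^'n \<Rightarrow> real^'r^'r" where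
  "Rop A \<theta> j x = (\<Sum>p\<in>UNIV. br (curv A p j x) (\<theta> p x))"

definition ixd :: "('n::finite \<Rightarrow> real^'n \<Rightarrow> real^'r^'r) \<Rightarrow> ('n \<Rightarrow> real^'n \<Rightarrow> real^'r^'r) \<Rightarrow> 'n \<Rightarrow> real^'n \<Rightarrow> real^'r^'r" where
  "ixd A \<theta> j x = (1/2) *\<^sub>R (\<Sum>k\<in>UNIV. (x $ k) *\<^sub>R (cov A k (\<theta> j) x - cov A j (\<theta> k) x))"

definition Lop :: "('n::finite \<Rightarrow> real^'n \<Rightarrow> real^'r^'r) \<Rightarrow> ('n \<Rightarrow> real^'n \<Rightarrow> real^'r^'r) \<Rightarrow> 'n \<Rightarrow> real^'n \<Rightarrow> real^'r^'r" where
  "Lop A \<theta> j x = - (dstard A \<theta> j x + Rop A \<theta> j x + ixd A \<theta> j x)"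

end

theory Submission
  imports Defs
begin

(*
  Both forms are of the shape theta = i_W F with the affine vector field W(x) = V + b x:
  i_V F has b = 0, and the soliton equation says J = i_(x/2) F, i.e. V = 0, b = 1/2.
  For such theta the second Bianchi identity gives (d theta)_kj = 2b F_kj + W^p nabla_p F_kj.
  Applying nabla_k, the Ricci identity turns W^p nabla_k nabla_p F_kj into
  W^p (nabla_p J_j + [F_kp, F_kj]); the bracket term cancels R(theta), and differentiating
  the soliton equation gives nabla_p J_j = 1/2 F_pj + 1/2 x^q nabla_p F_qj.  Collecting terms,
  L theta = b J + 1/2 theta, which is J for theta = J and 1/2 i_V F for theta = i_V F.
  The argument is pointwise and uses only smoothness of A and the soliton equation.
*)

lemma pd_eq: "(f has_derivative D) (at x) \<Longrightarrow> pd i f x = D (axis i 1)"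
  unfolding pd_def using frechet_derivative_at by metis

lemma pd_add:
  assumes "f differentiable (at x)" and "g differentiable (at x)"
  shows "pd i (\<lambda>y. f y + g y) x = pd i f x + pd i g x"
  using pd_eq[OF has_derivative_add[OF assms[unfolded frechet_derivative_works]]]
  by (simp add: pd_def)

lemma pd_diff:
  assumes "f differentiable (at x)" and "g differentiable (at x)"
  shows "pd i (\<lambda>y. f y - g y) x = pd i f x - pd i g x"
  using pd_eq[OF has_derivative_diff[OF assms[unfolded frechet_derivative_works]]]
  by (simp add: pd_def)

lemma pd_sum:
  assumes "\<And>p. p \<in> S \<Longrightarrow> f p differentiable (at x)"
  shows "pd i (\<lambda>y. \<Sum>p\<in>S. f p y) x = (\<Sum>p\<in>S. pd i (f p) x)"
  using pd_eq[OF has_derivative_sum[OF assms[unfolded frechet_derivative_works]]]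
  by (simp add: pd_def)

lemma pd_bounded_linear:
  assumes "bounded_linear L" and "f differentiable (at x)"
  shows "pd i (\<lambda>y. L (f y)) x = L (pd i f x)"
  using pd_eq[OF bounded_linear.has_derivative[OF assms(1) assms(2)[unfolded frechet_derivative_works]]]
  by (simp add: pd_def)

lemma pd_bounded_bilinear:
  fixes prod :: "'a::real_normed_vector \<Rightarrow> 'b::real_normed_vector \<Rightarrow> 'c::real_normed_vector"
  assumes "bounded_bilinear prod" and "f differentiable (at x)" and "g differentiable (at x)"
  shows "pd i (\<lambda>y. prod (f y) (g y)) x = prod (pd i f x) (g x) + prod (f x) (pd i g x)"
  using pd_eq[OF bounded_bilinear.FDERIV[OF assms(1) assms(2,3)[unfolded frechet_derivative_works]]]
  by (simp add: pd_def add.commute)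

lemma pd_const [simp]: "pd i (\<lambda>y. c) = (\<lambda>x. 0)"
  by (simp add: pd_def fun_eq_iff)

lemma has_derivative_affine_component:
  fixes b :: real
  shows "((\<lambda>y. V $ p + b * y $ p) has_derivative (\<lambda>h. b * h $ p)) (at x)"
  using bounded_linear_compose[OF bounded_linear_mult_right bounded_linear_vec_nth, of b p]
  by (auto intro!: derivative_eq_intros bounded_linear_imp_has_derivative)

lemma pd_affine_component:
  fixes b :: real
  shows "pd i (\<lambda>y. V $ p + b * y $ p) = (\<lambda>x. if i = p then b else 0)"
  by (simp add: fun_eq_iff pd_eq[OF has_derivative_affine_component] axis_def)

lemma differentiable_bounded_bilinear:
  fixes prod :: "'a::real_normed_vector \<Rightarrow> 'b::real_normed_vector \<Rightarrow> 'c::real_normed_vector"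
  assumes "bounded_bilinear prod" and "f differentiable (at x)" and "g differentiable (at x)"
  shows "(\<lambda>y. prod (f y) (g y)) differentiable (at x)"
  using assms bounded_bilinear.FDERIV[OF assms(1)] unfolding differentiable_def by blast

lemma differentiable_bounded_linear:
  "bounded_linear L \<Longrightarrow> f differentiable (at x) \<Longrightarrow> (\<lambda>y. L (f y)) differentiable (at x)"
  unfolding differentiable_def using bounded_linear.has_derivative by blast

lemma iterpd_append: "iterpd (is @ js) f = iterpd is (iterpd js f)"
  by (induction "is") auto

definition smooth_upto :: "nat \<Rightarrow> (real^'n::finite \<Rightarrow> 'b::real_normed_vector) \<Rightarrow> bool" where
  "smooth_upto n f \<longleftrightarrow> (\<forall>is x. length is \<le> n \<longrightarrow> iterpd is f differentiable (at x))"

lemma smooth_upto_0: "smooth_upto 0 f \<longleftrightarrow> (\<forall>x. f differentiable (at x))"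
  by (simp add: smooth_upto_def)

lemma smooth_upto_Suc:
  fixes f :: "real^'n::finite \<Rightarrow> 'b::real_normed_vector"
  shows "smooth_upto (Suc n) f \<longleftrightarrow> (\<forall>x. f differentiable (at x)) \<and> (\<forall>i. smooth_upto n (pd i f))"
proof
  assume f: "smooth_upto (Suc n) f"
  have "iterpd is (pd i f) differentiable (at x)" if "length is \<le> n" for "is" i x
    using f that unfolding smooth_upto_def by (metis iterpd_append iterpd.simps length_append_singleton
        Suc_le_mono)
  moreover have "f differentiable (at x)" for x
    using f unfolding smooth_upto_def by (metis iterpd.simps(1) list.size(3) le0)
  ultimately show "(\<forall>x. f differentiable (at x)) \<and> (\<forall>i. smooth_upto n (pd i f))"
    by (simp add: smooth_upto_def)
next
  assume f: "(\<forall>x. f differentiable (at x)) \<and> (\<forall>i. smooth_upto n (pd i f))"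
  show "smooth_upto (Suc n) f"
    unfolding smooth_upto_def
  proof (intro allI impI)
    fix "is" :: "'n list" and x
    assume "length is \<le> Suc n"
    with f show "iterpd is f differentiable (at x)"
      by (cases "is" rule: rev_cases) (auto simp: iterpd_append smooth_upto_def)
  qed
qed

lemma smooth_fun_iff_smooth_upto: "smooth_fun f \<longleftrightarrow> (\<forall>n. smooth_upto n f)"
  unfolding smooth_fun_def smooth_upto_def by auto

lemma smooth_upto_Suc_imp: "smooth_upto (Suc n) f \<Longrightarrow> smooth_upto n f"
  unfolding smooth_upto_def by auto

lemma smooth_upto_add:
  "smooth_upto n f \<Longrightarrow> smooth_upto n g \<Longrightarrow> smooth_upto n (\<lambda>y. f y + g y)"
proof (induction n arbitrary: f g)
  case 0
  then show ?case by (simp add: smooth_upto_0)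
next
  case (Suc n)
  then have "\<And>x. f differentiable (at x)" "\<And>x. g differentiable (at x)"
    by (auto simp: smooth_upto_Suc)
  then have "pd i (\<lambda>y. f y + g y) = (\<lambda>x. pd i f x + pd i g x)" for i
    by (simp add: fun_eq_iff pd_add)
  with Suc show ?case by (auto simp: smooth_upto_Suc)
qed

lemma smooth_upto_bounded_linear:
  fixes L :: "'a::real_normed_vector \<Rightarrow> 'b::real_normed_vector"
  assumes L: "bounded_linear L"
  shows "smooth_upto n f \<Longrightarrow> smooth_upto n (\<lambda>y. L (f y))"
proof (induction n arbitrary: f)
  case 0
  then show ?case by (simp add: smooth_upto_0 differentiable_bounded_linear[OF L])
next
  case (Suc n)
  then have "\<And>x. f differentiable (at x)"
    by (auto simp: smooth_upto_Suc)
  then have "pd i (\<lambda>y. L (f y)) = (\<lambda>x. L (pd i f x))" for i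
    by (simp add: fun_eq_iff pd_bounded_linear[OF L])
  with Suc show ?case
    by (auto simp: smooth_upto_Suc differentiable_bounded_linear[OF L])
qed

lemma smooth_upto_const: "smooth_upto n (\<lambda>y. c)"
  by (induction n arbitrary: c) (auto simp: smooth_upto_0 smooth_upto_Suc)

lemma smooth_upto_bounded_bilinear:
  fixes prod :: "'a::real_normed_vector \<Rightarrow> 'b::real_normed_vector \<Rightarrow> 'c::real_normed_vector"
  assumes bb: "bounded_bilinear prod"
  shows "smooth_upto n f \<Longrightarrow> smooth_upto n g \<Longrightarrow> smooth_upto n (\<lambda>y. prod (f y) (g y))"
proof (induction n arbitrary: f g)
  case 0
  then show ?case by (simp add: smooth_upto_0 differentiable_bounded_bilinear[OF bb])
next
  case (Suc n)
  then have df: "\<And>x. f differentiable (at x)" and dg: "\<And>x. g differentiable (at x)"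
    and pf: "\<And>i. smooth_upto n (pd i f)" and pg: "\<And>i. smooth_upto n (pd i g)"
    by (auto simp: smooth_upto_Suc)
  have "pd i (\<lambda>y. prod (f y) (g y)) = (\<lambda>x. prod (pd i f x) (g x) + prod (f x) (pd i g x))" for i
    by (simp add: fun_eq_iff pd_bounded_bilinear[OF bb df dg])
  moreover have "smooth_upto n (\<lambda>x. prod (pd i f x) (g x) + prod (f x) (pd i g x))" for i
    by (intro smooth_upto_add Suc.IH pf pg smooth_upto_Suc_imp[OF Suc.prems(1)]
        smooth_upto_Suc_imp[OF Suc.prems(2)])
  ultimately show ?case
    by (simp add: smooth_upto_Suc differentiable_bounded_bilinear[OF bb df dg])
qed

lemma smooth_fun_differentiable: "smooth_fun f \<Longrightarrow> f differentiable (at x)"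
  unfolding smooth_fun_def by (metis iterpd.simps(1))

lemma smooth_fun_pd: "smooth_fun f \<Longrightarrow> smooth_fun (pd i f)"
  unfolding smooth_fun_def by (metis iterpd.simps iterpd_append)

lemma smooth_fun_add: "smooth_fun f \<Longrightarrow> smooth_fun g \<Longrightarrow> smooth_fun (\<lambda>y. f y + g y)"
  by (simp add: smooth_fun_iff_smooth_upto smooth_upto_add)

lemma smooth_fun_bounded_linear:
  fixes L :: "'a::real_normed_vector \<Rightarrow> 'b::real_normed_vector"
  shows   "bounded_linear L \<Longrightarrow> smooth_fun f \<Longrightarrow> smooth_fun (\<lambda>y. L (f y))"
  by (simp add: smooth_fun_iff_smooth_upto smooth_upto_bounded_linear)

lemma smooth_fun_bounded_bilinear:
  fixes prod :: "'a::real_normed_vector \<Rightarrow> 'b::real_normed_vector \<Rightarrow> 'c::real_normed_vector"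
  shows   "bounded_bilinear prod \<Longrightarrow> smooth_fun f \<Longrightarrow> smooth_fun g \<Longrightarrow> smooth_fun (\<lambda>y. prod (f y) (g y))"
  by (simp add: smooth_fun_iff_smooth_upto smooth_upto_bounded_bilinear)

lemma smooth_fun_const: "smooth_fun (\<lambda>y. c)"
  by (simp add: smooth_fun_iff_smooth_upto smooth_upto_const)

lemma smooth_fun_diff: "smooth_fun f \<Longrightarrow> smooth_fun g \<Longrightarrow> smooth_fun (\<lambda>y. f y - g y)"
  using smooth_fun_add[OF _ smooth_fun_bounded_linear[OF bounded_linear_minus[OF bounded_linear_ident]]]
  by fastforce

lemma smooth_fun_scaleR: "smooth_fun c \<Longrightarrow> smooth_fun f \<Longrightarrow> smooth_fun (\<lambda>y. c y *\<^sub>R f y)"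
  using smooth_fun_bounded_bilinear[OF bounded_bilinear_scaleR] .

lemma smooth_fun_sum:
  "finite S \<Longrightarrow> (\<And>p. p \<in> S \<Longrightarrow> smooth_fun (f p)) \<Longrightarrow> smooth_fun (\<lambda>y. \<Sum>p\<in>S. f p y)"
  by (induction S rule: finite_induct) (auto intro: smooth_fun_add smooth_fun_const)

lemma smooth_fun_affine_component:
  fixes b :: real
  shows "smooth_fun (\<lambda>y. V $ p + b * y $ p)"
proof -
  have "smooth_upto n (\<lambda>y. V $ p + b * y $ p)" for n
    using differentiableI[OF has_derivative_affine_component]
    by (cases n) (auto simp: smooth_upto_0 smooth_upto_Suc pd_affine_component smooth_upto_const)
  then show ?thesis by (simp add: smooth_fun_iff_smooth_upto)
qed

section \<open>Symmetry of second partial derivatives\<close>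

lemma has_real_derivative_pd_along_axis:
  fixes f :: "real^'n::finite \<Rightarrow> real"
  assumes "f differentiable (at (y + s *\<^sub>R axis i 1))"
  shows "((\<lambda>s. f (y + s *\<^sub>R axis i 1)) has_real_derivative pd i f (y + s *\<^sub>R axis i 1)) (at s)"
proof -
  let ?D = "frechet_derivative f (at (y + s *\<^sub>R axis i 1))"
  have f': "(f has_derivative ?D) (at (y + s *\<^sub>R axis i 1))"
    using assms frechet_derivative_works by blast
  have "((\<lambda>s. y + s *\<^sub>R axis i (1::real)) has_derivative (\<lambda>s. s *\<^sub>R axis i 1)) (at s)"
    by (auto intro!: derivative_eq_intros)
  from has_derivative_compose[OF this f']
  have "((\<lambda>s. f (y + s *\<^sub>R axis i 1)) has_derivative (\<lambda>h. ?D (h *\<^sub>R axis i 1))) (at s)"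
    by (simp add: o_def)
  moreover have "(\<lambda>h. ?D (h *\<^sub>R axis i 1)) = (\<lambda>h. ?D (axis i 1) * h)"
    using linear_scale[OF has_derivative_linear[OF f']] by auto
  ultimately show ?thesis
    by (simp add: has_field_derivative_def pd_def)
qed

text \<open>Mean value theorem, first along \<open>e\<^sub>i\<close>, then along \<open>e\<^sub>j\<close>.\<close>
lemma second_difference_mean_value:
  fixes f :: "real^'n::finite \<Rightarrow> real"
  assumes d0: "\<And>x. f differentiable (at x)" and d1: "\<And>x. pd i f differentiable (at x)"
    and "0 < h"
  obtains s t where "0 < s" "s < h" "0 < t" "t < h"
    "f (x + h *\<^sub>R axis i 1 + h *\<^sub>R axis j 1) - f (x + h *\<^sub>R axis i 1) - f (x + h *\<^sub>R axis j 1) + f x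
       = h * h * pd j (pd i f) (x + s *\<^sub>R axis i 1 + t *\<^sub>R axis j 1)"
proof -
  define u where "u = axis i (1::real)"
  define v where "v = axis j (1::real)"
  define \<phi> where "\<phi> s = f (x + h *\<^sub>R v + s *\<^sub>R u) - f (x + s *\<^sub>R u)" for s
  have "(\<phi> has_real_derivative (pd i f (x + h *\<^sub>R v + s *\<^sub>R u) - pd i f (x + s *\<^sub>R u))) (at s)" for s
    unfolding \<phi>_def u_def by (intro DERIV_diff has_real_derivative_pd_along_axis d0)
  from MVT2[OF \<open>0 < h\<close> this] obtain s where s: "0 < s" "s < h"
    and es: "\<phi> h - \<phi> 0 = (h - 0) * (pd i f (x + h *\<^sub>R v + s *\<^sub>R u) - pd i f (x + s *\<^sub>R u))"
    by blast
  define \<psi> where "\<psi> t = pd i f (x + s *\<^sub>R u + t *\<^sub>R v)" for t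
  have "(\<psi> has_real_derivative pd j (pd i f) (x + s *\<^sub>R u + t *\<^sub>R v)) (at t)" for t
    unfolding \<psi>_def v_def by (intro has_real_derivative_pd_along_axis d1)
  from MVT2[OF \<open>0 < h\<close> this] obtain t where t: "0 < t" "t < h"
    and et: "\<psi> h - \<psi> 0 = (h - 0) * pd j (pd i f) (x + s *\<^sub>R u + t *\<^sub>R v)"
    by blast
  have "f (x + h *\<^sub>R u + h *\<^sub>R v) - f (x + h *\<^sub>R u) - f (x + h *\<^sub>R v) + f x = \<phi> h - \<phi> 0"
    unfolding \<phi>_def by (simp add: algebra_simps)
  also have "\<dots> = h * (\<psi> h - \<psi> 0)"
    using es unfolding \<psi>_def by (simp add: algebra_simps)
  also have "\<dots> = h * h * pd j (pd i f) (x + s *\<^sub>R u + t *\<^sub>R v)"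
    using et by simp
  finally show ?thesis using s t that unfolding u_def v_def by blast
qed

lemma dist_axis_steps_less:
  assumes "0 < s" "s < h" "0 < t" "t < h"
  shows "dist (x + s *\<^sub>R axis i (1::real) + t *\<^sub>R axis j 1) x < 2 * h"
proof -
  have "dist (x + s *\<^sub>R axis i (1::real) + t *\<^sub>R axis j 1) x = norm (s *\<^sub>R axis i (1::real) + t *\<^sub>R axis j 1)"
    by (simp add: dist_norm)
  also have "\<dots> \<le> norm (s *\<^sub>R axis i (1::real)) + norm (t *\<^sub>R axis j (1::real))"
    by (rule norm_triangle_ineq)
  also have "\<dots> = s + t" using assms by simp
  finally show ?thesis using assms by simp
qed

text \<open>Schwarz's theorem: both orders of differentiation are limits of the same second
  differences divided by \<open>h\<^sup>2\<close>.\<close>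
lemma pd_commute_real:
  fixes f :: "real^'n::finite \<Rightarrow> real"
  assumes d0: "\<And>x. f differentiable (at x)" and di: "\<And>x. pd i f differentiable (at x)"
    and dj: "\<And>x. pd j f differentiable (at x)"
    and c1: "isCont (pd j (pd i f)) x" and c2: "isCont (pd i (pd j f)) x"
  shows "pd j (pd i f) x = pd i (pd j f) x"
proof (rule ccontr)
  let ?a = "pd j (pd i f) x" and ?b = "pd i (pd j f) x"
  assume "?a \<noteq> ?b"
  define e where "e = \<bar>?a - ?b\<bar> / 2"
  have "e > 0" using \<open>?a \<noteq> ?b\<close> by (simp add: e_def)
  obtain d1 where d1: "d1 > 0" "\<And>y. dist y x < d1 \<Longrightarrow> dist (pd j (pd i f) y) ?a < e"
    using c1 \<open>e > 0\<close> unfolding continuous_at_eps_delta by blast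
  obtain d2 where d2: "d2 > 0" "\<And>y. dist y x < d2 \<Longrightarrow> dist (pd i (pd j f) y) ?b < e"
    using c2 \<open>e > 0\<close> unfolding continuous_at_eps_delta by blast
  define h where "h = min d1 d2 / 4"
  have "h > 0" using d1 d2 by (simp add: h_def)
  obtain s t where st: "0 < s" "s < h" "0 < t" "t < h" and
    E1: "f (x + h *\<^sub>R axis i 1 + h *\<^sub>R axis j 1) - f (x + h *\<^sub>R axis i 1) - f (x + h *\<^sub>R axis j 1) + f x
       = h * h * pd j (pd i f) (x + s *\<^sub>R axis i 1 + t *\<^sub>R axis j 1)"
    using second_difference_mean_value[OF d0 di \<open>h > 0\<close>] by blast
  obtain s' t' where st': "0 < s'" "s' < h" "0 < t'" "t' < h" and
    E2: "f (x + h *\<^sub>R axis j 1 + h *\<^sub>R axis i 1) - f (x + h *\<^sub>R axis j 1) - f (x + h *\<^sub>R axis i 1) + f x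
       = h * h * pd i (pd j f) (x + s' *\<^sub>R axis j 1 + t' *\<^sub>R axis i 1)"
    using second_difference_mean_value[OF d0 dj \<open>h > 0\<close>] by blast
  have "x + h *\<^sub>R axis j 1 + h *\<^sub>R axis i 1 = x + h *\<^sub>R axis i 1 + h *\<^sub>R axis j (1::real)"
    by (simp add: algebra_simps)
  then have eq: "pd j (pd i f) (x + s *\<^sub>R axis i 1 + t *\<^sub>R axis j 1)
      = pd i (pd j f) (x + s' *\<^sub>R axis j 1 + t' *\<^sub>R axis i 1)"
    using E1 E2 \<open>h > 0\<close> by (simp add: algebra_simps)
  have "dist (pd j (pd i f) (x + s *\<^sub>R axis i 1 + t *\<^sub>R axis j 1)) ?a < e"
    using d1 d2 dist_axis_steps_less[OF st, of x i j] by (intro d1(2)) (simp add: h_def)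
  moreover have "dist (pd i (pd j f) (x + s' *\<^sub>R axis j 1 + t' *\<^sub>R axis i 1)) ?b < e"
    using d1 d2 dist_axis_steps_less[OF st', of x j i] by (intro d2(2)) (simp add: h_def)
  ultimately have "\<bar>?a - ?b\<bar> < 2 * e"
    using eq by (simp add: dist_real_def)
  then show False by (simp add: e_def)
qed

lemma pd_commute:
  fixes f :: "real^'n::finite \<Rightarrow> 'b::euclidean_space"
  assumes "smooth_fun f"
  shows "pd j (pd i f) x = pd i (pd j f) x"
proof (rule euclidean_eqI)
  fix e :: 'b
  let ?L = "\<lambda>v::'b. v \<bullet> e"
  have L: "bounded_linear ?L" by (rule bounded_linear_inner_left)
  have sf1: "smooth_fun (pd k f)" and sf2: "smooth_fun (pd k (pd l f))" for k l
    using assms by (blast intro: smooth_fun_pd)+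
  have pg: "pd k (\<lambda>y. ?L (f y)) = (\<lambda>y. ?L (pd k f y))" for k
    using pd_bounded_linear[OF L smooth_fun_differentiable[OF assms]] by auto
  have pg2: "pd l (pd k (\<lambda>y. ?L (f y))) = (\<lambda>y. ?L (pd l (pd k f) y))" for k l
    unfolding pg using pd_bounded_linear[OF L smooth_fun_differentiable[OF sf1]] by auto
  have d0: "(\<lambda>y. ?L (f y)) differentiable (at y)" for y
    by (rule differentiable_bounded_linear[OF L smooth_fun_differentiable[OF assms]])
  have d1: "pd k (\<lambda>y. ?L (f y)) differentiable (at y)" for k y
    unfolding pg by (rule differentiable_bounded_linear[OF L smooth_fun_differentiable[OF sf1]])
  have c: "isCont (pd l (pd k (\<lambda>y. ?L (f y)))) x" for k l
    unfolding pg2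
    by (intro differentiable_imp_continuous_within differentiable_bounded_linear[OF L]
        smooth_fun_differentiable[OF sf2])
  have "pd j (pd i (\<lambda>y. ?L (f y))) x = pd i (pd j (\<lambda>y. ?L (f y))) x"
    by (rule pd_commute_real[OF d0 d1 d1 c c])
  then show "pd j (pd i f) x \<bullet> e = pd i (pd j f) x \<bullet> e"
    by (simp add: pg2)
qed

lemma matrix_add_rdistrib: "((A::real^'m^'k) + B) ** (C::real^'n^'m) = A ** C + B ** C"
  by (vector matrix_matrix_mult_def sum.distrib[symmetric] field_simps)

lemma matrix_diff_rdistrib: "((A::real^'m^'k) - B) ** (C::real^'n^'m) = A ** C - B ** C"
  by (vector matrix_matrix_mult_def sum_subtractf[symmetric] field_simps)

lemma matrix_diff_ldistrib: "(C::real^'m^'k) ** ((A::real^'n^'m) - B) = C ** A - C ** B"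
  by (vector matrix_matrix_mult_def sum_subtractf[symmetric] field_simps)

lemma bounded_bilinear_br: "bounded_bilinear (br :: real^'r^'r \<Rightarrow> _)"
  unfolding bilinear_conv_bounded_bilinear[symmetric] bilinear_def br_def
  by (auto intro!: linearI simp: matrix_add_ldistrib matrix_add_rdistrib scalar_matrix_assoc
      matrix_scalar_ac scaleR_diff_right)

lemmas br_simps = bounded_bilinear.add_left[OF bounded_bilinear_br]
  bounded_bilinear.add_right[OF bounded_bilinear_br]
  bounded_bilinear.diff_left[OF bounded_bilinear_br] bounded_bilinear.diff_right[OF bounded_bilinear_br]
  bounded_bilinear.minus_left[OF bounded_bilinear_br] bounded_bilinear.minus_right[OF bounded_bilinear_br]
  bounded_bilinear.zero_left[OF bounded_bilinear_br] bounded_bilinear.zero_right[OF bounded_bilinear_br]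
  bounded_bilinear.sum_left[OF bounded_bilinear_br] bounded_bilinear.sum_right[OF bounded_bilinear_br]
  bounded_bilinear.scaleR_left[OF bounded_bilinear_br] bounded_bilinear.scaleR_right[OF bounded_bilinear_br]

lemma br_jacobi: "br X (br Y Z) = br (br X Y) Z + br Y (br X (Z::real^'r^'r))"
  by (simp add: br_def matrix_diff_ldistrib matrix_diff_rdistrib matrix_mul_assoc algebra_simps)

lemma br_antisym: "br X Y = - br Y (X::real^'r^'r)"
  by (simp add: br_def)

lemma curv_antisym: "curv A i j x = - curv A j i x"
  by (simp add: curv_def br_antisym[of "A i x"])

lemma cov_add:
  "f differentiable (at x) \<Longrightarrow> g differentiable (at x) \<Longrightarrow>
   cov A k (\<lambda>y. f y + g y) x = cov A k f x + cov A k g x"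
  by (simp add: cov_def pd_add br_simps)

lemma cov_uminus: "f differentiable (at x) \<Longrightarrow> cov A k (\<lambda>y. - f y) x = - cov A k f x"
  by (simp add: cov_def pd_bounded_linear[OF bounded_linear_minus[OF bounded_linear_ident]] br_simps)

lemma cov_scaleR_const: "f differentiable (at x) \<Longrightarrow> cov A k (\<lambda>y. c *\<^sub>R f y) x = c *\<^sub>R cov A k f x"
  by (simp add: cov_def pd_bounded_linear[OF bounded_linear_scaleR_right] br_simps scaleR_add_right)

lemma cov_sum:
  "(\<And>p. p \<in> S \<Longrightarrow> f p differentiable (at x)) \<Longrightarrow>
   cov A k (\<lambda>y. \<Sum>p\<in>S. f p y) x = (\<Sum>p\<in>S. cov A k (f p) x)"
  by (simp add: cov_def pd_sum br_simps sum.distrib)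

lemma cov_scaleR:
  "c differentiable (at x) \<Longrightarrow> f differentiable (at x) \<Longrightarrow>
   cov A k (\<lambda>y. c y *\<^sub>R f y) x = pd k c x *\<^sub>R f x + c x *\<^sub>R cov A k f x"
  by (simp add: cov_def pd_bounded_bilinear[OF bounded_bilinear_scaleR] br_simps algebra_simps)

text \<open>The covariant derivative is a derivation of the bracket because \<open>ad (A\<^sub>k)\<close> is one
  (Jacobi identity).\<close>
lemma cov_br:
  "f differentiable (at x) \<Longrightarrow> g differentiable (at x) \<Longrightarrow>
   cov A k (\<lambda>y. br (f y) (g y)) x = br (cov A k f x) (g x) + br (f x) (cov A k g x)"
  using br_jacobi[of "A k x" "f x" "g x"]
  by (simp add: cov_def pd_bounded_bilinear[OF bounded_bilinear_br] br_simps algebra_simps)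

lemma cov_affine_combination:
  assumes "\<And>p. smooth_fun (T p)"
  shows "cov A k (\<lambda>y. \<Sum>p\<in>UNIV. (V $ p + b * y $ p) *\<^sub>R T p y) x
     = b *\<^sub>R T k x + (\<Sum>p\<in>UNIV. (V $ p + b * x $ p) *\<^sub>R cov A k (T p) x)"
proof -
  have "cov A k (\<lambda>y. \<Sum>p\<in>UNIV. (V $ p + b * y $ p) *\<^sub>R T p y) x
      = (\<Sum>p\<in>UNIV. cov A k (\<lambda>y. (V $ p + b * y $ p) *\<^sub>R T p y) x)"
    by (intro cov_sum smooth_fun_differentiable smooth_fun_scaleR smooth_fun_affine_component assms)
  also have "\<dots> = (\<Sum>p\<in>UNIV. (if k = p then b *\<^sub>R T p x else 0) + (V $ p + b * x $ p) *\<^sub>R cov A k (T p) x)"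
    by (intro sum.cong refl, subst cov_scaleR)
      (auto intro!: smooth_fun_differentiable smooth_fun_affine_component assms simp: pd_affine_component)
  also have "\<dots> = b *\<^sub>R T k x + (\<Sum>p\<in>UNIV. (V $ p + b * x $ p) *\<^sub>R cov A k (T p) x)"
    by (simp add: sum.distrib)
  finally show ?thesis .
qed

lemma Rop_affine_contraction:
  "Rop A (\<lambda>j y. \<Sum>p\<in>UNIV. (V $ p + b * y $ p) *\<^sub>R curv A p j y) j x
   = (\<Sum>p\<in>UNIV. (V $ p + b * x $ p) *\<^sub>R (\<Sum>k\<in>UNIV. br (curv A k p x) (curv A k j x)))"
proof -
  have "br (curv A k j x) (curv A p k x) = br (curv A k p x) (curv A k j x)" for k p
    by (simp add: curv_antisym[of A p k] br_antisym[of "curv A k j x"] br_simps)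
  then have "Rop A (\<lambda>j y. \<Sum>p\<in>UNIV. (V $ p + b * y $ p) *\<^sub>R curv A p j y) j x
      = (\<Sum>k\<in>UNIV. \<Sum>p\<in>UNIV. (V $ p + b * x $ p) *\<^sub>R br (curv A k p x) (curv A k j x))"
    by (simp add: Rop_def br_simps)
  also have "\<dots> = (\<Sum>p\<in>UNIV. (V $ p + b * x $ p) *\<^sub>R (\<Sum>k\<in>UNIV. br (curv A k p x) (curv A k j x)))"
    by (subst sum.swap) (simp add: scaleR_sum_right)
  finally show ?thesis .
qed

locale smooth_connection =
  fixes A :: "'n::finite \<Rightarrow> real^'n \<Rightarrow> real^'r^'r"
  assumes smooth_connection: "smooth_fun (A i)"
begin

lemma smooth_curv: "smooth_fun (curv A i j)"
proof -
  have "curv A i j = (\<lambda>x. pd i (A j) x - pd j (A i) x + br (A i x) (A j x))"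
    by (simp add: fun_eq_iff curv_def)
  then show ?thesis
    by (simp add: smooth_fun_add smooth_fun_diff smooth_fun_pd smooth_connection
        smooth_fun_bounded_bilinear[OF bounded_bilinear_br])
qed

lemma smooth_cov: "smooth_fun T \<Longrightarrow> smooth_fun (cov A p T)"
proof -
  assume "smooth_fun T"
  moreover have "cov A p T = (\<lambda>x. pd p T x + br (A p x) (T x))"
    by (simp add: fun_eq_iff cov_def)
  ultimately show ?thesis
    by (simp add: smooth_fun_add smooth_fun_pd smooth_connection
        smooth_fun_bounded_bilinear[OF bounded_bilinear_br])
qed

lemma cov_cov_expand:
  assumes "smooth_fun T"
  shows "cov A k (cov A p T) x = pd k (pd p T) x + br (A k x) (pd p T x)
     + br (pd k (A p) x + br (A k x) (A p x)) (T x) + br (A p x) (pd k T x + br (A k x) (T x))"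
proof -
  have d: "\<And>y. pd p T differentiable (at y)" "\<And>y. (\<lambda>y. br (A p y) (T y)) differentiable (at y)"
    using assms by (auto intro!: smooth_fun_differentiable smooth_fun_pd smooth_connection
        smooth_fun_bounded_bilinear[OF bounded_bilinear_br])
  have "cov A k (cov A p T) x = cov A k (\<lambda>y. pd p T y + br (A p y) (T y)) x"
    by (simp add: cov_def[abs_def])
  also have "\<dots> = cov A k (pd p T) x + (br (cov A k (A p) x) (T x) + br (A p x) (cov A k T x))"
    using assms by (simp add: cov_add d cov_br smooth_fun_differentiable smooth_connection)
  finally show ?thesis by (simp add: cov_def algebra_simps)
qed

lemma cov_cov_commute:
  assumes "smooth_fun T"
  shows "cov A k (cov A p T) x = cov A p (cov A k T) x + br (curv A k p x) (T x)"
  using cov_cov_expand[OF assms, of k p x] cov_cov_expand[OF assms, of p k x]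
    pd_commute[OF assms, of k p x] br_jacobi[of "A k x" "A p x" "T x"] br_antisym[of "A p x" "A k x"]
  by (simp add: curv_def br_simps algebra_simps)

lemma cov_curv_expand:
  "cov A k (curv A p j) x = pd k (pd p (A j)) x - pd k (pd j (A p)) x
    + br (pd k (A p) x) (A j x) + br (A p x) (pd k (A j) x) + br (A k x) (curv A p j x)"
proof -
  have d: "\<And>i l y. pd i (A l) differentiable (at y)" "\<And>l y. A l differentiable (at y)"
    by (intro smooth_fun_differentiable smooth_fun_pd smooth_connection)+
  have "pd k (curv A p j) x = pd k (\<lambda>y. pd p (A j) y - pd j (A p) y + br (A p y) (A j y)) x"
    by (simp add: curv_def[abs_def])
  also have "\<dots> = pd k (\<lambda>y. pd p (A j) y - pd j (A p) y) x + pd k (\<lambda>y. br (A p y) (A j y)) x"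
    by (rule pd_add) (auto intro!: differentiable_bounded_bilinear[OF bounded_bilinear_br]
        differentiable_diff d)
  also have "\<dots> = pd k (pd p (A j)) x - pd k (pd j (A p)) x
      + (br (pd k (A p) x) (A j x) + br (A p x) (pd k (A j) x))"
    by (simp add: pd_diff pd_bounded_bilinear[OF bounded_bilinear_br] d)
  finally show ?thesis by (simp add: cov_def algebra_simps)
qed

lemma second_bianchi: "cov A k (curv A p j) x + cov A p (curv A j k) x + cov A j (curv A k p) x = 0"
  unfolding cov_curv_expand curv_def
  using pd_commute[OF smooth_connection[of j], of k p x] pd_commute[OF smooth_connection[of p], of k j x]
    pd_commute[OF smooth_connection[of k], of p j x] br_jacobi[of "A k x" "A p x" "A j x"]
    br_antisym[of "pd k (A p) x" "A j x"] br_antisym[of "pd p (A j) x" "A k x"]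
    br_antisym[of "pd j (A k) x" "A p x"] br_antisym[of "br (A k x) (A p x)" "A j x"]
    br_antisym[of "A k x" "A j x"]
  by (simp add: br_simps algebra_simps)

lemma cov_curv_exchange: "cov A k (curv A p j) x - cov A j (curv A p k) x = cov A p (curv A k j) x"
proof -
  have anti: "cov A q (curv A i l) x = - cov A q (curv A l i) x" for q i l
  proof -
    have "curv A i l = (\<lambda>y. - curv A l i y)"
      using curv_antisym by blast
    then show ?thesis
      using cov_uminus[OF smooth_fun_differentiable[OF smooth_curv]] by simp
  qed
  show ?thesis
    using second_bianchi[of k p j x] anti[of p j k] anti[of j k p] by (simp add: algebra_simps)
qed

end

section \<open>Contracting the curvature with affine vector fields\<close>

definition contract_curv ::
  "('n::finite \<Rightarrow> real^'n \<Rightarrow> real^'r^'r) \<Rightarrow> (real^'n \<Rightarrow> real^'n) \<Rightarrow> 'n \<Rightarrow> real^'n \<Rightarrow> real^'r^'r"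
  where "contract_curv A W j x = (\<Sum>p\<in>UNIV. W x $ p *\<^sub>R curv A p j x)"

lemma contract_curv_affine:
  "contract_curv A (\<lambda>y. V + b *\<^sub>R y) = (\<lambda>j y. \<Sum>p\<in>UNIV. (V $ p + b * y $ p) *\<^sub>R curv A p j y)"
  by (simp add: fun_eq_iff contract_curv_def)

context smooth_connection
begin

lemma d_affine_contraction:
  "cov A k (\<lambda>y. \<Sum>p\<in>UNIV. (V $ p + b * y $ p) *\<^sub>R curv A p j y) y
   - cov A j (\<lambda>y. \<Sum>p\<in>UNIV. (V $ p + b * y $ p) *\<^sub>R curv A p k y) y
   = (2 * b) *\<^sub>R curv A k j y + (\<Sum>p\<in>UNIV. (V $ p + b * y $ p) *\<^sub>R cov A p (curv A k j) y)"
proof -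
  have "cov A k (\<lambda>y. \<Sum>p\<in>UNIV. (V $ p + b * y $ p) *\<^sub>R curv A p j y) y
      - cov A j (\<lambda>y. \<Sum>p\<in>UNIV. (V $ p + b * y $ p) *\<^sub>R curv A p k y) y
    = b *\<^sub>R curv A k j y - b *\<^sub>R curv A j k y
      + (\<Sum>p\<in>UNIV. (V $ p + b * y $ p) *\<^sub>R (cov A k (curv A p j) y - cov A j (curv A p k) y))"
    by (simp add: cov_affine_combination smooth_curv scaleR_diff_right sum_subtractf)
  also have "\<dots> = (2 * b) *\<^sub>R curv A k j y + (\<Sum>p\<in>UNIV. (V $ p + b * y $ p) *\<^sub>R cov A p (curv A k j) y)"
  proof -
    have "(2 * b) *\<^sub>R curv A k j y = b *\<^sub>R curv A k j y + b *\<^sub>R curv A k j y"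
      by (simp add: scaleR_left_distrib[symmetric])
    then show ?thesis
      by (simp add: cov_curv_exchange curv_antisym[of A j k])
  qed
  finally show ?thesis .
qed

lemma dstard_affine_contraction:
  "dstard A (\<lambda>j y. \<Sum>p\<in>UNIV. (V $ p + b * y $ p) *\<^sub>R curv A p j y) j x
   = - ((3 * b) *\<^sub>R Jform A j x
        + (\<Sum>p\<in>UNIV. (V $ p + b * x $ p) *\<^sub>R (\<Sum>k\<in>UNIV. cov A k (cov A p (curv A k j)) x)))"
proof -
  have inner: "cov A k (\<lambda>y. cov A k (\<lambda>y. \<Sum>p\<in>UNIV. (V $ p + b * y $ p) *\<^sub>R curv A p j y) y
      - cov A j (\<lambda>y. \<Sum>p\<in>UNIV. (V $ p + b * y $ p) *\<^sub>R curv A p k y) y) x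
    = (3 * b) *\<^sub>R cov A k (curv A k j) x
      + (\<Sum>p\<in>UNIV. (V $ p + b * x $ p) *\<^sub>R cov A k (cov A p (curv A k j)) x)" for k
  proof -
    have "cov A k (\<lambda>y. cov A k (\<lambda>y. \<Sum>p\<in>UNIV. (V $ p + b * y $ p) *\<^sub>R curv A p j y) y
        - cov A j (\<lambda>y. \<Sum>p\<in>UNIV. (V $ p + b * y $ p) *\<^sub>R curv A p k y) y) x
      = cov A k (\<lambda>y. (2 * b) *\<^sub>R curv A k j y
          + (\<Sum>p\<in>UNIV. (V $ p + b * y $ p) *\<^sub>R cov A p (curv A k j) y)) x"
      by (simp only: d_affine_contraction)
    also have "\<dots> = (2 * b) *\<^sub>R cov A k (curv A k j) x
        + (b *\<^sub>R cov A k (curv A k j) x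
          + (\<Sum>p\<in>UNIV. (V $ p + b * x $ p) *\<^sub>R cov A k (cov A p (curv A k j)) x))"
      by (simp only: cov_add cov_scaleR_const cov_affine_combination smooth_cov smooth_curv
          smooth_fun_differentiable smooth_fun_sum smooth_fun_scaleR smooth_fun_affine_component
          smooth_fun_const finite)
    finally show ?thesis
      by (simp add: scaleR_left_distrib[symmetric])
  qed
  show ?thesis
    unfolding dstard_def Jform_def inner sum.distrib scaleR_sum_right
    by (subst sum.swap) (rule refl)
qed

lemma sum_cov_cov_curv:
  "(\<Sum>k\<in>UNIV. cov A k (cov A p (curv A k j)) x)
   = cov A p (Jform A j) x + (\<Sum>k\<in>UNIV. br (curv A k p x) (curv A k j x))"
proof -
  have "(\<Sum>k\<in>UNIV. cov A k (cov A p (curv A k j)) x)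
      = (\<Sum>k\<in>UNIV. cov A p (cov A k (curv A k j)) x + br (curv A k p x) (curv A k j x))"
    by (intro sum.cong refl cov_cov_commute smooth_curv)
  also have "\<dots> = cov A p (\<lambda>y. \<Sum>k\<in>UNIV. cov A k (curv A k j) y) x
      + (\<Sum>k\<in>UNIV. br (curv A k p x) (curv A k j x))"
    by (simp add: cov_sum sum.distrib smooth_fun_differentiable smooth_cov smooth_curv)
  finally show ?thesis
    by (simp add: Jform_def[abs_def])
qed

end

locale yang_mills_soliton = smooth_connection +
  assumes soliton_equation: "Jform A j x = (1/2) *\<^sub>R (\<Sum>p\<in>UNIV. x $ p *\<^sub>R curv A p j x)"
begin

lemma cov_Jform:
  "cov A p (Jform A j) x = (1/2) *\<^sub>R curv A p j x + (\<Sum>q\<in>UNIV. ((1/2) * x $ q) *\<^sub>R cov A p (curv A q j) x)"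
proof -
  have "Jform A j = (\<lambda>y. \<Sum>q\<in>UNIV. (0 $ q + (1/2) * y $ q) *\<^sub>R curv A q j y)"
    by (simp add: fun_eq_iff soliton_equation scaleR_sum_right)
  then show ?thesis
    by (simp only: cov_affine_combination smooth_curv) simp
qed

lemma Lop_affine_contraction:
  "Lop A (contract_curv A (\<lambda>y. V + b *\<^sub>R y)) j x
   = b *\<^sub>R Jform A j x + (1/2) *\<^sub>R contract_curv A (\<lambda>y. V + b *\<^sub>R y) j x"
proof -
  define c where "c p = V $ p + b * x $ p" for p
  define \<Theta> where "\<Theta> = (\<Sum>p\<in>UNIV. c p *\<^sub>R curv A p j x)"
  define X where "X = (\<Sum>k\<in>UNIV. x $ k *\<^sub>R (\<Sum>p\<in>UNIV. c p *\<^sub>R cov A p (curv A k j) x))"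
  define Q where "Q = (\<Sum>p\<in>UNIV. c p *\<^sub>R (\<Sum>k\<in>UNIV. br (curv A k p x) (curv A k j x)))"
  let ?\<theta> = "\<lambda>j y. \<Sum>p\<in>UNIV. (V $ p + b * y $ p) *\<^sub>R curv A p j y"
  have X_swap: "(\<Sum>p\<in>UNIV. c p *\<^sub>R (\<Sum>q\<in>UNIV. ((1/2) * x $ q) *\<^sub>R cov A p (curv A q j) x))
      = (1/2) *\<^sub>R X"
    unfolding X_def scaleR_sum_right scaleR_scaleR
    by (subst sum.swap) (simp add: mult_ac)
  have "(\<Sum>p\<in>UNIV. c p *\<^sub>R (\<Sum>k\<in>UNIV. cov A k (cov A p (curv A k j)) x))
      = (1/2) *\<^sub>R \<Theta> + (1/2) *\<^sub>R X + Q"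
    unfolding sum_cov_cov_curv cov_Jform scaleR_add_right sum.distrib X_swap
    by (simp add: \<Theta>_def Q_def scaleR_sum_right)
  then have dstard: "dstard A ?\<theta> j x = - ((3 * b) *\<^sub>R Jform A j x + ((1/2) *\<^sub>R \<Theta> + (1/2) *\<^sub>R X + Q))"
    by (simp add: dstard_affine_contraction c_def)
  have Rop: "Rop A ?\<theta> j x = Q"
    by (simp add: Rop_affine_contraction Q_def c_def)
  have "ixd A ?\<theta> j x
      = (1/2) *\<^sub>R (\<Sum>k\<in>UNIV. x $ k *\<^sub>R ((2 * b) *\<^sub>R curv A k j x + (\<Sum>p\<in>UNIV. c p *\<^sub>R cov A p (curv A k j) x)))"
    by (simp add: ixd_def d_affine_contraction c_def)
  also have "\<dots> = b *\<^sub>R (\<Sum>k\<in>UNIV. x $ k *\<^sub>R curv A k j x) + (1/2) *\<^sub>R X"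
    by (simp add: X_def scaleR_add_right sum.distrib scaleR_sum_right mult_ac)
  finally have ixd: "ixd A ?\<theta> j x = (2 * b) *\<^sub>R Jform A j x + (1/2) *\<^sub>R X"
    by (simp add: soliton_equation)
  have "contract_curv A (\<lambda>y. V + b *\<^sub>R y) j x = \<Theta>"
    by (simp add: contract_curv_def \<Theta>_def c_def)
  moreover have "(3 * b) *\<^sub>R Jform A j x = (2 * b) *\<^sub>R Jform A j x + b *\<^sub>R Jform A j x"
    by (simp add: scaleR_left_distrib[symmetric])
  ultimately show ?thesis
    unfolding contract_curv_affine Lop_def dstard Rop ixd
    by (simp add: algebra_simps)
qed

end

theorem mainTheorem11:
  fixes G :: "(real^'r^'r) set" and A :: "'n::finite \<Rightarrow> real^'n \<Rightarrow> real^'r^'r"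
  assumes "compact_subgroup_SO G"
    and "S01 (lie_algebra G) A"
  shows "(\<forall>j x. Lop A (Jform A) j x = Jform A j x) \<and>
         (\<forall>V j x. Lop A (iF A V) j x = (1/2) *\<^sub>R iF A V j x)"
proof -
  interpret yang_mills_soliton A
    using assms(2) by unfold_locales (auto simp: S01_def right_minus_eq)
  have J: "Jform A = contract_curv A (\<lambda>y. 0 + (1/2) *\<^sub>R y)"
    by (simp add: fun_eq_iff contract_curv_def soliton_equation scaleR_sum_right)
  have iF: "iF A V = contract_curv A (\<lambda>y. V + 0 *\<^sub>R y)" for V
    by (simp add: fun_eq_iff contract_curv_def iF_def)
  have "Lop A (Jform A) j x = Jform A j x" for j x
    using Lop_affine_contraction[of 0 "1/2" j x]
    unfolding J[symmetric] by (simp add: scaleR_left_distrib[symmetric])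
  moreover have "Lop A (iF A V) j x = (1/2) *\<^sub>R iF A V j x" for V j x
    using Lop_affine_contraction[of V 0 j x] unfolding iF[symmetric] by simp
  ultimately show ?thesis by blast
qed

end
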